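(* For any $d$-dimensional Fano simplex $\Delta$ of Gorenstein index $g$, the number $g^{d-1}\lambda(\Delta^* )$ is an integer.
   Context: A Fano simplex is a full-dimensional simplex in $\mathbb{Q}^d$ with primitive vertices in $\mathbb{Z}^d$ and the origin in its interior. Its dual is $\Delta^*=\{u:\langle u,v\rangle\ge-1\ \forall v\in\Delta\}$. The Gorenstein index of a Fano simplex is the least $g\ge1$ such that $g\Delta^*$ has integral vertices. For an IP simplex (origin in the interior) with vertices $v_0,\dots,v_d$, the weight system is $Q=(q_0,\dots,q_d)$, $q_i=|\det(v_j:j\neq i)|$, and the factor $\lambda$ is the unique positive rational with $Q=\lambda Q'$, $Q'$ positive integers with $\gcd 1$. *)

theory Defs
  imports "HOL-Analysis.Analysis"
begin

text \<open>Points of Q^d are modelled in real^'n with d = CARD('n).\<close>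

definition integral_pt :: "real^'n \<Rightarrow> bool" where
  "integral_pt v \<longleftrightarrow> (\<forall>i. v $ i \<in> \<int>)"

definition primitive_pt :: "real^'n \<Rightarrow> bool" where
  "primitive_pt v \<longleftrightarrow> integral_pt v \<and> v \<noteq> 0 \<and>
     (\<forall>k::int. k > 0 \<longrightarrow> integral_pt ((1 / real_of_int k) *\<^sub>R v) \<longrightarrow> k = 1)"

definition full_simplex_vertices :: "(real^'n) set \<Rightarrow> bool" where
  "full_simplex_vertices V \<longleftrightarrow> finite V \<and> card V = CARD('n) + 1 \<and> \<not> affine_dependent V"

definition fano_simplex :: "(real^'n) set \<Rightarrow> bool" where
  "fano_simplex V \<longleftrightarrow> full_simplex_vertices V \<and> (\<forall>v\<in>V. primitive_pt v)
      \<and> 0 \<in> interior (convex hull V)"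

definition dual_poly :: "(real^'n) set \<Rightarrow> (real^'n) set" where
  "dual_poly P = {u. \<forall>v\<in>P. inner u v \<ge> -1}"

definition vertices :: "(real^'n) set \<Rightarrow> (real^'n) set" where
  "vertices P = {x. x extreme_point_of P}"

definition gorenstein_index :: "(real^'n) set \<Rightarrow> nat" where
  "gorenstein_index P = (LEAST g::nat. g \<ge> 1 \<and>
      (\<forall>x \<in> vertices ((\<lambda>u. real g *\<^sub>R u) ` dual_poly P). integral_pt x))"

text \<open>Weight q_w of vertex w of a simplex with vertex set W: absolute value of the
  determinant of the matrix whose columns are the other vertices (independent of their order).\<close>
definition weight :: "(real^'n) set \<Rightarrow> real^'n \<Rightarrow> real" where
  "weight W w = (let f = (SOME f :: 'n \<Rightarrow> real^'n. bij_betw f UNIV (W - {w}))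
                 in \<bar>det (\<chi> i j. f j $ i)\<bar>)"

definition weight_factor :: "(real^'n) set \<Rightarrow> real" where
  "weight_factor W = (THE l. l > 0 \<and> l \<in> \<rat> \<and>
      (\<exists>Q' :: real^'n \<Rightarrow> int. (\<forall>w\<in>W. Q' w > 0 \<and> weight W w = l * real_of_int (Q' w))
            \<and> Gcd (Q' ` W) = 1))"

end

theory Submission
  imports Defs
begin

text \<open>The vertices of the dual of an IP simplex are the facet normals u_x, one for each vertex x,
  determined by inner u_x w = -1 for the other vertices w; the Gorenstein index g is the least
  positive integer making every g u_x integral. The weight of u_x is the absolute determinant of
  the matrix A with rows u_w (w \<noteq> x). As A x = (-1, ..., -1), Cramer's rule for the integral
  matrix g A at the point x / g shows that g^(d-1) det A x_k is an integer for every k, and since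
  x is primitive, g^(d-1) det A is an integer. Finally, if G q is integral for every weight q,
  the factor is gcd (G q) / G, so G times the factor is an integer.\<close>

section \<open>Integral linear algebra\<close>

lemma Ints_det:
  fixes A :: "real^'n^'n"
  assumes "\<And>i j. A$i$j \<in> \<int>"
  shows "det A \<in> \<int>"
  unfolding det_def by (intro Ints_sum Ints_mult Ints_prod) (auto simp: assms)

lemma Ints_mult_det_of_integral_solution:
  fixes A :: "real^'n^'n"
  assumes "\<And>i j. A$i$j \<in> \<int>" and "\<And>i. (A *v x)$i \<in> \<int>"
  shows "x$k * det A \<in> \<int>"
proof -
  have "x$k * det A = det (\<chi> i j. if j = k then (A *v x)$i else A$i$j)"
    by (rule cramer_lemma[symmetric])
  also have "\<dots> \<in> \<int>"
    by (rule Ints_det) (simp add: assms)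
  finally show ?thesis .
qed

lemma det_scaleR:
  fixes A :: "real^'n^'n"
  shows "det (c *\<^sub>R A) = c ^ CARD('n) * det A"
  unfolding det_def by (simp add: sum_distrib_left prod.distrib mult_ac)

lemma ex_integral_multiple_of_solution:
  fixes A :: "real^'n^'n"
  assumes "\<And>i j. A$i$j \<in> \<int>" and "\<And>i. (A *v u)$i \<in> \<int>" and "det A \<noteq> 0"
  shows "\<exists>k::nat. k \<ge> 1 \<and> integral_pt (real k *\<^sub>R u)"
proof -
  obtain m where m: "det A = of_int m"
    using Ints_det[OF assms(1)] by (auto elim: Ints_cases)
  have "integral_pt (real (nat \<bar>m\<bar>) *\<^sub>R u)"
    unfolding integral_pt_def
  proof
    fix i
    have "(real (nat \<bar>m\<bar>) *\<^sub>R u) $ i = (if m \<ge> 0 then u$i * det A else - (u$i * det A))"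
      by (simp add: m)
    then show "(real (nat \<bar>m\<bar>) *\<^sub>R u) $ i \<in> \<int>"
      using Ints_mult_det_of_integral_solution[OF assms(1,2)] by simp
  qed
  moreover have "nat \<bar>m\<bar> \<ge> 1"
    using assms(3) m by simp
  ultimately show ?thesis by blast
qed

lemma integral_pt_scaleR_of_nat: "integral_pt v \<Longrightarrow> integral_pt (real m *\<^sub>R v)"
  unfolding integral_pt_def by simp

lemma ex_common_integral_multiple:
  assumes "finite S" and "\<And>u. u \<in> S \<Longrightarrow> \<exists>k::nat. k \<ge> 1 \<and> integral_pt (real k *\<^sub>R u)"
  shows "\<exists>k::nat. k \<ge> 1 \<and> (\<forall>u\<in>S. integral_pt (real k *\<^sub>R u))"
  using assms
proof (induction S rule: finite_induct)
  case empty
  show ?case by auto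
next
  case (insert a S)
  obtain k where k: "k \<ge> 1" "\<forall>u\<in>S. integral_pt (real k *\<^sub>R u)"
    using insert by blast
  obtain m where m: "m \<ge> 1" "integral_pt (real m *\<^sub>R a)"
    using insert by blast
  have "integral_pt (real (k * m) *\<^sub>R u)" if "u \<in> insert a S" for u
  proof (cases "u = a")
    case True
    have "real (k * m) *\<^sub>R a = real k *\<^sub>R (real m *\<^sub>R a)" by simp
    then show ?thesis using m(2) True integral_pt_scaleR_of_nat by metis
  next
    case False
    have "real (k * m) *\<^sub>R u = real m *\<^sub>R (real k *\<^sub>R u)" by simp
    moreover have "integral_pt (real k *\<^sub>R u)" using k(2) False that by simp
    ultimately show ?thesis using integral_pt_scaleR_of_nat by metis
  qed
  moreover have "k * m \<ge> 1" using k m by simp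
  ultimately show ?case by blast
qed

lemma primitive_pt_Ints_of_integral_multiple:
  fixes v :: "real^'n"
  assumes "primitive_pt v" and "\<And>k. z * v$k \<in> \<int>"
  shows "z \<in> \<int>"
proof -
  from assms(1) have v: "integral_pt v" "v \<noteq> 0"
    and primitive: "\<And>k::int. k > 0 \<Longrightarrow> integral_pt ((1 / real_of_int k) *\<^sub>R v) \<Longrightarrow> k = 1"
    by (auto simp: primitive_pt_def)
  obtain i where "v$i \<noteq> 0" using v(2) by (metis vec_eq_iff zero_index)
  obtain m where m: "v$i = of_int m" using v(1) by (auto simp: integral_pt_def elim!: Ints_cases)
  obtain p where p: "z * v$i = of_int p" using assms(2)[of i] by (auto elim!: Ints_cases)
  have "z = of_int p / of_int m" using p m \<open>v$i \<noteq> 0\<close> by (simp add: field_simps)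
  then obtain a b where b: "b > 0" "coprime a b" and z: "z = of_int a / of_int b"
    using Rats_cases' Rats_divide Rats_of_int by metis
  have "integral_pt ((1 / real_of_int b) *\<^sub>R v)"
    unfolding integral_pt_def
  proof
    fix k
    obtain c where c: "v$k = of_int c" using v(1) by (auto simp: integral_pt_def elim!: Ints_cases)
    obtain r where "z * v$k = of_int r" using assms(2)[of k] by (auto elim!: Ints_cases)
    then have "real_of_int (a * c) = of_int (b * r)" using z c b by (simp add: field_simps)
    then have "b dvd a * c" by (metis dvd_triv_left of_int_eq_iff)
    then obtain c' where "c = b * c'"
      using b(2) by (metis coprime_commute coprime_dvd_mult_right_iff dvdE)
    then show "((1 / real_of_int b) *\<^sub>R v) $ k \<in> \<int>" using c b by simp
  qed
  then have "b = 1" using primitive b by blast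
  then show ?thesis using z by simp
qed

lemma Ints_power_mult_det_of_primitive_solution:
  fixes A :: "real^'n^'n" and v :: "real^'n"
  assumes "\<And>i j. g * A$i$j \<in> \<int>" and "\<And>i. (A *v v)$i \<in> \<int>"
    and "primitive_pt v" and "g \<noteq> 0"
  shows "g ^ (CARD('n) - 1) * det A \<in> \<int>"
proof (rule primitive_pt_Ints_of_integral_multiple[OF assms(3)])
  fix k
  have "(g *\<^sub>R A) *v ((1 / g) *\<^sub>R v) = A *v v"
    using assms(4) by (simp add: matrix_scaleR_vector_ac)
  then have "((1 / g) *\<^sub>R v)$k * det (g *\<^sub>R A) \<in> \<int>"
    by (intro Ints_mult_det_of_integral_solution) (simp_all add: assms(1,2))
  moreover have "g ^ CARD('n) = g * g ^ (CARD('n) - 1)"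
    by (simp add: power_eq_if)
  ultimately show "g ^ (CARD('n) - 1) * det A * v$k \<in> \<int>"
    using assms(4) by (simp add: det_scaleR mult_ac)
qed

lemma invertible_matrix_of_independent_rows:
  fixes e :: "'n \<Rightarrow> real^'n"
  assumes "inj e" and "independent (range e)"
  shows "invertible (\<chi> i. e i)"
proof -
  have "card (range e) = CARD('n)"
    using assms(1) by (simp add: card_image)
  then have span: "span (range e) = UNIV"
    using card_ge_dim_independent[of "range e" UNIV] assms(2) by auto
  have "z = 0" if "(\<chi> i. e i) *v z = 0" for z
  proof -
    have "orthogonal z y" if "y \<in> range e" for y
      using that \<open>(\<chi> i. e i) *v z = 0\<close>
      by (auto simp: orthogonal_def vec_eq_iff matrix_vector_mul_component inner_commute)
    then have "orthogonal z z"
      using orthogonal_to_span span by blast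
    then show ?thesis by (simp add: orthogonal_def)
  qed
  then show ?thesis
    by (simp add: invertible_left_inverse matrix_left_invertible_ker)
qed

lemma weight_eq_abs_det:
  fixes f :: "'n \<Rightarrow> real^'n"
  assumes "bij_betw f UNIV (W - {w})"
  shows "weight W w = \<bar>det (\<chi> i. f i)\<bar>"
proof -
  define f0 where "f0 = (SOME f :: 'n \<Rightarrow> real^'n. bij_betw f UNIV (W - {w}))"
  have f0: "bij_betw f0 UNIV (W - {w})"
    unfolding f0_def using assms by (rule someI[where x = f])
  define p where "p = inv f \<circ> f0"
  have "bij p"
    unfolding p_def using bij_betw_trans[OF f0 bij_betw_inv_into[OF assms]] by simp
  then have p: "p permutes UNIV"
    by (rule bij_imp_permutes) simp
  have "f (p i) = f0 i" for i
    unfolding p_def using f0 assms by (metis bij_betw_def comp_apply f_inv_into_f rangeI)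
  then have "(\<chi> i. f0 i) = (\<chi> i. (\<chi> i. f i) $ p i)"
    by simp
  then have "det (\<chi> i. f0 i) = of_int (sign p) * det (\<chi> i. f i)"
    using det_permute_rows[OF p, of "\<chi> i. f i"] by (simp only:)
  moreover have "(\<chi> i j. f0 j $ i) = transpose (\<chi> i. f0 i)"
    by (simp add: transpose_def)
  ultimately show ?thesis
    unfolding weight_def f0_def[symmetric] Let_def by (simp add: abs_mult sign_def)
qed

section \<open>Duals and vertices\<close>

lemma dual_poly_convex_hull: "dual_poly (convex hull S) = dual_poly S"
proof
  show "dual_poly (convex hull S) \<subseteq> dual_poly S"
    unfolding dual_poly_def using hull_subset[of S convex] by blast
  show "dual_poly S \<subseteq> dual_poly (convex hull S)"
  proof
    fix u assume "u \<in> dual_poly S"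
    then have "convex hull S \<subseteq> {v. inner u v \<ge> -1}"
      by (intro hull_minimal) (auto simp: dual_poly_def convex_halfspace_ge)
    then show "u \<in> dual_poly (convex hull S)"
      unfolding dual_poly_def by blast
  qed
qed

lemma convex_dual_poly: "convex (dual_poly S)"
proof -
  have "dual_poly S = (\<Inter>v\<in>S. {u. inner v u \<ge> -1})"
    by (auto simp: dual_poly_def inner_commute)
  then show ?thesis
    by (simp add: convex_INT convex_halfspace_ge)
qed

lemma vertices_linear_image:
  assumes "linear f" and "inj f"
  shows "vertices (f ` P) = f ` vertices P"
proof -
  have "f x extreme_point_of f ` P \<longleftrightarrow> x extreme_point_of P" for x
    using face_of_linear_image[OF assms, of "{x}" P] by (simp add: face_of_singleton)
  moreover have "y \<in> range f" if "y extreme_point_of f ` P" for y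
    using that by (auto simp: extreme_point_of_def)
  ultimately show ?thesis
    unfolding vertices_def by blast
qed

section \<open>The factor of a weight system\<close>

definition rational_factor :: "'a set \<Rightarrow> ('a \<Rightarrow> real) \<Rightarrow> real" where
  "rational_factor W q = (THE l. l > 0 \<and> l \<in> \<rat> \<and>
      (\<exists>Q :: 'a \<Rightarrow> int. (\<forall>w\<in>W. Q w > 0 \<and> q w = l * real_of_int (Q w)) \<and> Gcd (Q ` W) = 1))"

lemma weight_factor_eq_rational_factor: "weight_factor W = rational_factor W (weight W)"
  unfolding weight_factor_def rational_factor_def ..

lemma rational_factor_unique:
  assumes "W \<noteq> {}" and "l1 > 0" and "l2 > 0"
    and Q1: "\<forall>w\<in>W. Q1 w > 0 \<and> q w = l1 * real_of_int (Q1 w)" "Gcd (Q1 ` W) = 1"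
    and Q2: "\<forall>w\<in>W. Q2 w > 0 \<and> q w = l2 * real_of_int (Q2 w)" "Gcd (Q2 ` W) = 1"
  shows "l1 = l2"
proof -
  obtain w0 where w0: "w0 \<in> W" using assms(1) by blast
  have "Q2 w0 * Q1 w = Q1 w0 * Q2 w" if "w \<in> W" for w
  proof -
    have "l1 * l2 * of_int (Q2 w0 * Q1 w) = (l1 * of_int (Q1 w)) * (l2 * of_int (Q2 w0))"
      by (simp add: algebra_simps)
    also have "\<dots> = (l2 * of_int (Q2 w)) * (l1 * of_int (Q1 w0))"
      using Q1(1) Q2(1) that w0 by metis
    also have "\<dots> = l1 * l2 * of_int (Q1 w0 * Q2 w)"
      by (simp add: algebra_simps)
    finally have "real_of_int (Q2 w0 * Q1 w) = of_int (Q1 w0 * Q2 w)"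
      using assms(2,3) by simp
    then show ?thesis by (simp only: of_int_eq_iff)
  qed
  then have "(*) (Q2 w0) ` Q1 ` W = (*) (Q1 w0) ` Q2 ` W"
    by (force simp: image_image intro: image_cong)
  then have "normalize (Q2 w0 * Gcd (Q1 ` W)) = normalize (Q1 w0 * Gcd (Q2 ` W))"
    by (simp only: Gcd_mult[symmetric])
  then have "Q2 w0 = Q1 w0"
    using Q1 Q2 w0 by (simp add: abs_of_pos)
  then show ?thesis
    using Q1(1) Q2(1) w0 by (metis mult_right_cancel of_int_0_eq_iff less_irrefl)
qed

lemma rational_factor_eqI:
  assumes "W \<noteq> {}" and "l > 0" and "l \<in> \<rat>"
    and "\<forall>w\<in>W. Q w > 0 \<and> q w = l * real_of_int (Q w)" and "Gcd (Q ` W) = 1"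
  shows "rational_factor W q = l"
  unfolding rational_factor_def
proof (rule the_equality)
  show "l > 0 \<and> l \<in> \<rat> \<and> (\<exists>Q. (\<forall>w\<in>W. Q w > 0 \<and> q w = l * real_of_int (Q w)) \<and> Gcd (Q ` W) = 1)"
    using assms by blast
next
  fix l' assume "l' > 0 \<and> l' \<in> \<rat> \<and>
    (\<exists>Q. (\<forall>w\<in>W. Q w > 0 \<and> q w = l' * real_of_int (Q w)) \<and> Gcd (Q ` W) = 1)"
  then show "l' = l"
    using rational_factor_unique[OF assms(1) _ assms(2) _ _ assms(4,5)] by blast
qed

text \<open>The factor is gcd (G q_w) / G.\<close>
lemma Ints_mult_rational_factor:
  assumes "W \<noteq> {}" and "\<And>w. w \<in> W \<Longrightarrow> q w > 0" and "\<And>w. w \<in> W \<Longrightarrow> G * q w \<in> \<int>"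
    and "G \<in> \<int>" and "G > 0"
  shows "G * rational_factor W q \<in> \<int>"
proof -
  define n where "n w = \<lfloor>G * q w\<rfloor>" for w
  have n: "of_int (n w) = G * q w" if "w \<in> W" for w
    using assms(3)[OF that] unfolding n_def by (metis Ints_cases floor_of_int)
  have n_pos: "n w > 0" if "w \<in> W" for w
    using n[OF that] assms(2)[OF that] assms(5) by (metis mult_pos_pos of_int_0_less_iff)
  define c where "c = Gcd (n ` W)"
  have "c \<noteq> 0"
    unfolding c_def using assms(1) n_pos by (force simp: Gcd_0_iff)
  then have c_pos: "c > 0"
    unfolding c_def by (simp add: order_le_neq_trans)
  define Q where "Q w = n w div c" for w
  have nQ: "n w = c * Q w" if "w \<in> W" for w
    unfolding Q_def c_def using that by simp
  have "(*) c ` Q ` W = n ` W"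
    using nQ by (force simp: image_image)
  then have "normalize (c * Gcd (Q ` W)) = c"
    by (simp only: Gcd_mult[symmetric] c_def[symmetric] normalize_Gcd)
  then have "Gcd (Q ` W) = 1"
    using c_pos by (simp add: abs_mult)
  moreover have "\<forall>w\<in>W. Q w > 0 \<and> q w = of_int c / G * real_of_int (Q w)"
  proof
    fix w assume "w \<in> W"
    then have "G * q w = of_int c * of_int (Q w)"
      using n nQ by (metis of_int_mult)
    then show "Q w > 0 \<and> q w = of_int c / G * real_of_int (Q w)"
      using \<open>w \<in> W\<close> nQ n_pos c_pos assms(5) by (auto simp: field_simps zero_less_mult_iff)
  qed
  moreover have "of_int c / G \<in> \<rat>"
    using assms(4) by (metis Ints_cases Rats_divide Rats_of_int)
  ultimately have "rational_factor W q = of_int c / G"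
    using assms(1,5) c_pos by (intro rational_factor_eqI) auto
  then show ?thesis
    using assms(5) by simp
qed

section \<open>Facet normals of an IP simplex\<close>

locale ip_simplex =
  fixes V :: "(real^'n) set"
  assumes finite_V: "finite V"
    and card_V: "card V = CARD('n) + 1"
    and affine_independent_V: "\<not> affine_dependent V"
    and zero_in_interior: "0 \<in> interior (convex hull V)"
begin

lemma V_nonempty: "V \<noteq> {}"
  using card_V by auto

lemma card_delete: "x \<in> V \<Longrightarrow> card (V - {x}) = CARD('n)"
  using finite_V card_V by simp

definition bary :: "real^'n \<Rightarrow> real" where
  "bary = (SOME l. (\<forall>x\<in>V. 0 < l x) \<and> sum l V = 1 \<and> (\<Sum>x\<in>V. l x *\<^sub>R x) = 0)"

lemma bary_pos: "x \<in> V \<Longrightarrow> bary x > 0"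
  and sum_bary: "sum bary V = 1"
  and sum_bary_scaleR: "(\<Sum>x\<in>V. bary x *\<^sub>R x) = 0"
proof -
  have "\<exists>l. (\<forall>x\<in>V. 0 < l x) \<and> sum l V = 1 \<and> (\<Sum>x\<in>V. l x *\<^sub>R x) = 0"
    using zero_in_interior interior_convex_hull_explicit_minimal[OF affine_independent_V] card_V
    by (auto split: if_splits)
  then have "(\<forall>x\<in>V. 0 < bary x) \<and> sum bary V = 1 \<and> (\<Sum>x\<in>V. bary x *\<^sub>R x) = 0"
    unfolding bary_def by (rule someI_ex)
  then show "x \<in> V \<Longrightarrow> bary x > 0" "sum bary V = 1" "(\<Sum>x\<in>V. bary x *\<^sub>R x) = 0"
    by auto
qed

text \<open>A linear relation among the other vertices, corrected by a multiple of the barycentric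
  relation of the origin, would be an affine relation among all vertices.\<close>
lemma independent_delete:
  assumes x: "x \<in> V"
  shows "independent (V - {x})"
proof
  assume "dependent (V - {x})"
  then obtain c where c: "\<exists>v\<in>V - {x}. c v \<noteq> 0" "(\<Sum>v\<in>V - {x}. c v *\<^sub>R v) = 0"
    using dependent_finite[of "V - {x}"] finite_V by auto
  define c' where "c' w = (if w = x then 0 else c w)" for w
  define t where "t = sum c (V - {x})"
  define U where "U w = c' w - t * bary w" for w
  have "sum c' V = t"
    unfolding t_def using sum.remove[OF finite_V x, of c'] by (simp add: c'_def)
  then have "sum U V = 0"
    unfolding U_def using sum_bary by (simp add: sum_subtractf flip: sum_distrib_left)
  moreover have "(\<Sum>w\<in>V. c' w *\<^sub>R w) = 0"
    using sum.remove[OF finite_V x, of "\<lambda>w. c' w *\<^sub>R w"] c(2) by (simp add: c'_def)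
  then have "(\<Sum>w\<in>V. U w *\<^sub>R w) = 0"
    unfolding U_def using sum_bary_scaleR
    by (simp add: scaleR_diff_left sum_subtractf flip: scaleR_scaleR scaleR_sum_right)
  moreover have "\<exists>v\<in>V. U v \<noteq> 0"
    using c(1) x bary_pos[OF x] by (cases "t = 0") (auto simp: U_def c'_def)
  ultimately have "affine_dependent V"
    using affine_dependent_explicit_finite[OF finite_V] by blast
  then show False
    using affine_independent_V by blast
qed

lemma eq_0_if_orthogonal_delete:
  assumes "x \<in> V" and "\<And>w. w \<in> V - {x} \<Longrightarrow> inner u w = 0"
  shows "u = 0"
proof -
  have "span (V - {x}) = UNIV"
    using card_ge_dim_independent[of "V - {x}" UNIV] independent_delete card_delete assms(1)
    by auto
  then have "orthogonal u u"
    using orthogonal_to_span[of u "V - {x}"] assms(2) by (auto simp: orthogonal_def)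
  then show ?thesis
    by (simp add: orthogonal_def)
qed

lemma ex_enumeration_delete:
  assumes "x \<in> V"
  obtains e :: "'n \<Rightarrow> real^'n" where "bij_betw e UNIV (V - {x})"
  using finite_same_card_bij[of "UNIV :: 'n set" "V - {x}"] finite_V card_delete[OF assms] by auto

lemma invertible_enumeration_delete:
  fixes e :: "'n \<Rightarrow> real^'n"
  assumes "x \<in> V" and "bij_betw e UNIV (V - {x})"
  shows "invertible (\<chi> i. e i)"
  using assms invertible_matrix_of_independent_rows[of e] independent_delete
  by (simp add: bij_betw_def)

definition facet_normal :: "real^'n \<Rightarrow> real^'n" where
  "facet_normal x = (SOME u. \<forall>w\<in>V - {x}. inner u w = -1)"

lemma inner_facet_normal:
  assumes "x \<in> V" and "w \<in> V" and "w \<noteq> x"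
  shows "inner (facet_normal x) w = -1"
proof -
  obtain e :: "'n \<Rightarrow> real^'n" where e: "bij_betw e UNIV (V - {x})"
    using ex_enumeration_delete[OF assms(1)] .
  then obtain B where "(\<chi> i. e i) ** B = mat 1"
    using invertible_enumeration_delete[OF assms(1)] unfolding invertible_def by blast
  then have "(\<chi> i. e i) *v (B *v (\<chi> i. -1)) = (\<chi> i. -1)"
    by (simp add: matrix_vector_mul_assoc)
  then have "inner (e i) (B *v (\<chi> i. -1)) = -1" for i
    by (simp add: vec_eq_iff matrix_vector_mul_component)
  then have "\<forall>w\<in>V - {x}. inner (B *v (\<chi> i. -1)) w = -1"
    using e by (metis bij_betw_imp_surj_on imageE inner_commute)
  then have "\<forall>w\<in>V - {x}. inner (facet_normal x) w = -1"
    unfolding facet_normal_def by (rule someI)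
  then show ?thesis
    using assms by blast
qed

lemma facet_normal_unique:
  assumes "x \<in> V" and "\<And>w. w \<in> V - {x} \<Longrightarrow> inner u w = -1"
  shows "u = facet_normal x"
proof -
  have "u - facet_normal x = 0"
    using assms by (intro eq_0_if_orthogonal_delete) (auto simp: inner_diff_left inner_facet_normal)
  then show ?thesis by simp
qed

lemma bary_mult_inner_facet_normal_self:
  assumes x: "x \<in> V"
  shows "bary x * (inner (facet_normal x) x + 1) = 1"
proof -
  have "0 = inner (facet_normal x) (\<Sum>w\<in>V. bary w *\<^sub>R w)"
    using sum_bary_scaleR by simp
  also have "\<dots> = (\<Sum>w\<in>V. bary w * inner (facet_normal x) w)"
    by (simp add: inner_sum_right)
  also have "\<dots> = bary x * inner (facet_normal x) x + (\<Sum>w\<in>V - {x}. bary w * inner (facet_normal x) w)"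
    by (rule sum.remove[OF finite_V x])
  also have "(\<Sum>w\<in>V - {x}. bary w * inner (facet_normal x) w) = - (\<Sum>w\<in>V - {x}. bary w)"
    using x by (simp add: inner_facet_normal sum_negf)
  also have "\<dots> = bary x - 1"
    using sum.remove[OF finite_V x, of bary] sum_bary by simp
  finally show ?thesis
    by (simp add: algebra_simps)
qed

lemma inner_facet_normal_self_gt:
  assumes "x \<in> V"
  shows "inner (facet_normal x) x > -1"
proof -
  have "bary x * (inner (facet_normal x) x + 1) > 0"
    using bary_mult_inner_facet_normal_self[OF assms] by simp
  then show ?thesis
    using bary_pos[OF assms] by (simp add: zero_less_mult_iff)
qed

lemma inj_on_facet_normal: "inj_on facet_normal V"
proof (rule inj_onI, rule ccontr)
  fix x y assume x: "x \<in> V" and y: "y \<in> V" and eq: "facet_normal x = facet_normal y" and "x \<noteq> y"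
  then have "inner (facet_normal x) w = -1" if "w \<in> V" for w
    using that inner_facet_normal by metis
  then have "inner (facet_normal x) (\<Sum>w\<in>V. bary w *\<^sub>R w) = -1"
    using sum_bary by (simp add: inner_sum_right sum_negf)
  then show False
    using sum_bary_scaleR by simp
qed

lemma facet_normal_in_dual_poly:
  assumes "x \<in> V"
  shows "facet_normal x \<in> dual_poly V"
  unfolding dual_poly_def
proof (intro CollectI ballI)
  fix w assume "w \<in> V"
  then show "inner (facet_normal x) w \<ge> -1"
    using assms inner_facet_normal[of x w] inner_facet_normal_self_gt[of x] by (cases "w = x") auto
qed

lemma independent_facet_normals:
  assumes x: "x \<in> V"
  shows "independent (facet_normal ` (V - {x}))"
proof (rule independent_if_scalars_zero)
  show "finite (facet_normal ` (V - {x}))"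
    using finite_V by simp
next
  fix c u
  assume sum0: "(\<Sum>u\<in>facet_normal ` (V - {x}). c u *\<^sub>R u) = 0" and "u \<in> facet_normal ` (V - {x})"
  then obtain y0 where y0: "y0 \<in> V" "y0 \<noteq> x" and u: "u = facet_normal y0"
    by blast
  have inj: "inj_on facet_normal (V - {x})"
    using inj_on_facet_normal by (rule inj_on_subset) blast
  have "(\<Sum>y\<in>V - {x}. c (facet_normal y) *\<^sub>R facet_normal y) = 0"
    using sum0 by (simp add: sum.reindex[OF inj])
  from arg_cong[OF this, of "\<lambda>v. inner v w" for w]
  have sum_inner: "(\<Sum>y\<in>V - {x}. c (facet_normal y) * inner (facet_normal y) w) = 0" for w
    by (simp add: inner_sum_left)
  have "(\<Sum>y\<in>V - {x}. c (facet_normal y) * inner (facet_normal y) w) =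
      (if w \<in> V - {x} then c (facet_normal w) * (inner (facet_normal w) w + 1) else 0)
      - (\<Sum>y\<in>V - {x}. c (facet_normal y))" if w: "w \<in> V" for w
  proof -
    have "c (facet_normal y) * inner (facet_normal y) w = (if y = w
        then c (facet_normal w) * (inner (facet_normal w) w + 1) else 0) - c (facet_normal y)"
      if "y \<in> V" for y
      using that w inner_facet_normal[of y w] by (auto simp: algebra_simps)
    then have "(\<Sum>y\<in>V - {x}. c (facet_normal y) * inner (facet_normal y) w) = (\<Sum>y\<in>V - {x}.
        (if y = w then c (facet_normal w) * (inner (facet_normal w) w + 1) else 0) - c (facet_normal y))"
      by (intro sum.cong) auto
    then show ?thesis
      using finite_V by (simp add: sum_subtractf)
  qed
  from this[of x] this[of y0] have "c u * (inner (facet_normal y0) y0 + 1) = 0"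
    using sum_inner x y0 u by simp
  then show "c u = 0"
    using inner_facet_normal_self_gt[OF y0(1)] by simp
qed

text \<open>A point u of the dual is the convex combination of the facet normals with weights
  bary w * (1 + inner u w).\<close>
lemma dual_poly_subset_convex_hull_facet_normals: "dual_poly V \<subseteq> convex hull (facet_normal ` V)"
proof
  fix u assume u: "u \<in> dual_poly V"
  define \<mu> where "\<mu> w = bary w * (1 + inner u w)" for w
  have \<mu>_nonneg: "\<mu> w \<ge> 0" if "w \<in> V" for w
    using bary_pos[OF that] u that unfolding \<mu>_def dual_poly_def by auto
  have "sum \<mu> V = sum bary V + inner u (\<Sum>w\<in>V. bary w *\<^sub>R w)"
    unfolding \<mu>_def by (simp add: algebra_simps sum.distrib inner_sum_right)
  then have sum_\<mu>: "sum \<mu> V = 1"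
    using sum_bary sum_bary_scaleR by simp
  have "inner (u - (\<Sum>w\<in>V. \<mu> w *\<^sub>R facet_normal w)) x = 0" if x: "x \<in> V" for x
  proof -
    have "(\<Sum>w\<in>V. \<mu> w * inner (facet_normal w) x) =
        \<mu> x * inner (facet_normal x) x + (\<Sum>w\<in>V - {x}. \<mu> w * inner (facet_normal w) x)"
      by (rule sum.remove[OF finite_V x])
    also have "(\<Sum>w\<in>V - {x}. \<mu> w * inner (facet_normal w) x) = (\<Sum>w\<in>V - {x}. - \<mu> w)"
      using x by (intro sum.cong) (auto simp: inner_facet_normal)
    also have "\<dots> = \<mu> x - 1"
      using sum.remove[OF finite_V x, of \<mu>] sum_\<mu> by (simp add: sum_negf)
    finally have "(\<Sum>w\<in>V. \<mu> w * inner (facet_normal w) x) =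
        (1 + inner u x) * (bary x * (inner (facet_normal x) x + 1)) - 1"
      unfolding \<mu>_def by (simp add: algebra_simps)
    then show ?thesis
      using bary_mult_inner_facet_normal_self[OF x] by (simp add: inner_diff_left inner_sum_left)
  qed
  then have "u = (\<Sum>w\<in>V. \<mu> w *\<^sub>R facet_normal w)"
    using eq_0_if_orthogonal_delete V_nonempty by force
  also have "\<dots> \<in> convex hull (facet_normal ` V)"
    by (rule convex_sum[OF finite_V convex_convex_hull sum_\<mu> \<mu>_nonneg]) (auto intro: hull_inc)
  finally show "u \<in> convex hull (facet_normal ` V)" .
qed

lemma dual_poly_eq_convex_hull_facet_normals: "dual_poly V = convex hull (facet_normal ` V)"
proof
  show "convex hull (facet_normal ` V) \<subseteq> dual_poly V"
    by (rule hull_minimal) (auto simp: convex_dual_poly facet_normal_in_dual_poly)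
qed (rule dual_poly_subset_convex_hull_facet_normals)

lemma facet_normal_extreme_point:
  assumes x: "x \<in> V"
  shows "facet_normal x extreme_point_of dual_poly V"
  unfolding extreme_point_of_def
proof (intro conjI ballI facet_normal_in_dual_poly[OF x])
  fix a b assume a: "a \<in> dual_poly V" and b: "b \<in> dual_poly V"
  show "facet_normal x \<notin> open_segment a b"
  proof
    assume "facet_normal x \<in> open_segment a b"
    then obtain t where "a \<noteq> b" and t: "0 < t" "t < 1"
      and eq: "facet_normal x = (1 - t) *\<^sub>R a + t *\<^sub>R b"
      by (auto simp: in_segment)
    have "inner a w = -1 \<and> inner b w = -1" if w: "w \<in> V - {x}" for w
    proof -
      have "(1 - t) * (inner a w + 1) + t * (inner b w + 1) = 0"
        using inner_facet_normal[OF x] w eq by (simp add: inner_add_left algebra_simps)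
      moreover have "(1 - t) * (inner a w + 1) \<ge> 0" "t * (inner b w + 1) \<ge> 0"
        using a b w t by (auto simp: dual_poly_def)
      ultimately show ?thesis
        using t by (simp add: add_nonneg_eq_0_iff)
    qed
    then have "a = facet_normal x" "b = facet_normal x"
      using facet_normal_unique[OF x] by auto
    then show False
      using \<open>a \<noteq> b\<close> by simp
  qed
qed

lemma vertices_dual_poly: "vertices (dual_poly V) = facet_normal ` V"
proof
  show "vertices (dual_poly V) \<subseteq> facet_normal ` V"
    using extreme_point_of_convex_hull
    by (auto simp: vertices_def dual_poly_eq_convex_hull_facet_normals)
  show "facet_normal ` V \<subseteq> vertices (dual_poly V)"
    using facet_normal_extreme_point by (auto simp: vertices_def)
qed

lemma integral_multiple_facet_normal:
  assumes "\<forall>v\<in>V. integral_pt v" and x: "x \<in> V"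
  shows "\<exists>k::nat. k \<ge> 1 \<and> integral_pt (real k *\<^sub>R facet_normal x)"
proof -
  obtain e :: "'n \<Rightarrow> real^'n" where e: "bij_betw e UNIV (V - {x})"
    using ex_enumeration_delete[OF x] .
  then have e_in: "e i \<in> V - {x}" for i
    by (auto simp: bij_betw_def)
  have "(\<chi> i. e i) $ i $ j \<in> \<int>" for i j
    using assms(1) e_in[of i] by (simp add: integral_pt_def)
  moreover have "inner (e i) (facet_normal x) = -1" for i
    using x e_in[of i] inner_facet_normal[of x "e i"] by (simp add: inner_commute)
  then have "((\<chi> i. e i) *v facet_normal x) $ i \<in> \<int>" for i
    by (simp add: matrix_vector_mul_component)
  moreover have "det (\<chi> i. e i) \<noteq> 0"
    using invertible_enumeration_delete[OF x e] by (simp add: invertible_det_nz)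
  ultimately show ?thesis
    by (rule ex_integral_multiple_of_solution)
qed

lemma gorenstein_index_facet_normals:
  assumes "\<forall>v\<in>V. integral_pt v"
  shows "gorenstein_index (convex hull V) \<ge> 1
    \<and> (\<forall>x\<in>V. integral_pt (real (gorenstein_index (convex hull V)) *\<^sub>R facet_normal x))"
proof -
  have vertices_scaled: "vertices ((\<lambda>u. real g *\<^sub>R u) ` dual_poly (convex hull V))
      = (\<lambda>u. real g *\<^sub>R u) ` facet_normal ` V" if "g \<ge> 1" for g
  proof -
    have "inj (\<lambda>u::real^'n. real g *\<^sub>R u)"
      using that by (auto intro: injI)
    then show ?thesis
      by (simp add: vertices_linear_image dual_poly_convex_hull vertices_dual_poly)
  qed
  let ?P = "\<lambda>g::nat. g \<ge> 1 \<and>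
    (\<forall>u\<in>vertices ((\<lambda>u. real g *\<^sub>R u) ` dual_poly (convex hull V)). integral_pt u)"
  have P_iff: "?P g \<longleftrightarrow> g \<ge> 1 \<and> (\<forall>x\<in>V. integral_pt (real g *\<^sub>R facet_normal x))" for g
    using vertices_scaled[of g] by auto
  obtain g where "g \<ge> 1" "\<forall>u\<in>facet_normal ` V. integral_pt (real g *\<^sub>R u)"
    using ex_common_integral_multiple[of "facet_normal ` V"] finite_V
      integral_multiple_facet_normal[OF assms] by auto
  then have "?P g"
    using P_iff[of g] by auto
  then have "?P (gorenstein_index (convex hull V))"
    unfolding gorenstein_index_def by (rule LeastI)
  then show ?thesis
    using P_iff by blast
qed

lemma weight_facet_normal_eq_abs_det:
  assumes x: "x \<in> V"
  obtains e :: "'n \<Rightarrow> real^'n" where "bij_betw e UNIV (V - {x})"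
    and "weight (facet_normal ` V) (facet_normal x) = \<bar>det (\<chi> i. facet_normal (e i))\<bar>"
proof -
  obtain e :: "'n \<Rightarrow> real^'n" where e: "bij_betw e UNIV (V - {x})"
    using ex_enumeration_delete[OF x] .
  have "bij_betw facet_normal (V - {x}) (facet_normal ` V - {facet_normal x})"
    using inj_on_facet_normal x
    by (simp add: bij_betw_def inj_on_diff inj_on_image_set_diff)
  then have "bij_betw (facet_normal \<circ> e) UNIV (facet_normal ` V - {facet_normal x})"
    using e by (rule bij_betw_trans[rotated])
  then have "weight (facet_normal ` V) (facet_normal x) = \<bar>det (\<chi> i. (facet_normal \<circ> e) i)\<bar>"
    by (rule weight_eq_abs_det)
  then show ?thesis
    using that[OF e] by simp
qed

lemma weight_facet_normal_pos:
  assumes x: "x \<in> V"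
  shows "weight (facet_normal ` V) (facet_normal x) > 0"
proof -
  obtain e :: "'n \<Rightarrow> real^'n" where e: "bij_betw e UNIV (V - {x})"
    and weight: "weight (facet_normal ` V) (facet_normal x) = \<bar>det (\<chi> i. facet_normal (e i))\<bar>"
    using weight_facet_normal_eq_abs_det[OF x] .
  have "inj_on facet_normal (range e)"
    using inj_on_facet_normal by (rule inj_on_subset) (use e in \<open>auto simp: bij_betw_def\<close>)
  then have "inj (facet_normal \<circ> e)"
    using e by (simp add: bij_betw_def comp_inj_on)
  moreover have "range (facet_normal \<circ> e) = facet_normal ` (V - {x})"
    using e by (metis bij_betw_def image_comp)
  ultimately have "invertible (\<chi> i. (facet_normal \<circ> e) i)"
    using independent_facet_normals[OF x]
    by (intro invertible_matrix_of_independent_rows) (simp_all add: o_def)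
  then show ?thesis
    unfolding weight by (simp add: invertible_det_nz o_def)
qed

lemma Ints_power_mult_weight_facet_normal:
  assumes x: "x \<in> V" and "primitive_pt x" and "g > 0"
    and "\<And>y. y \<in> V \<Longrightarrow> integral_pt (g *\<^sub>R facet_normal y)"
  shows "g ^ (CARD('n) - 1) * weight (facet_normal ` V) (facet_normal x) \<in> \<int>"
proof -
  obtain e :: "'n \<Rightarrow> real^'n" where e: "bij_betw e UNIV (V - {x})"
    and weight: "weight (facet_normal ` V) (facet_normal x) = \<bar>det (\<chi> i. facet_normal (e i))\<bar>"
    using weight_facet_normal_eq_abs_det[OF x] .
  have e_in: "e i \<in> V - {x}" for i
    using e by (auto simp: bij_betw_def)
  have "g ^ (CARD('n) - 1) * det (\<chi> i. facet_normal (e i)) \<in> \<int>"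
  proof (rule Ints_power_mult_det_of_primitive_solution[OF _ _ assms(2)])
    show "g * (\<chi> i. facet_normal (e i)) $ i $ j \<in> \<int>" for i j
      using assms(4)[of "e i"] e_in by (simp add: integral_pt_def)
    have "inner (facet_normal (e i)) x = -1" for i
      using x e_in by (metis DiffE insertCI inner_facet_normal)
    then show "((\<chi> i. facet_normal (e i)) *v x) $ i \<in> \<int>" for i
      by (simp add: matrix_vector_mul_component)
  qed (use assms(3) in simp)
  then have "\<bar>g ^ (CARD('n) - 1) * det (\<chi> i. facet_normal (e i))\<bar> \<in> \<int>"
    by (rule Ints_abs)
  then show ?thesis
    unfolding weight using assms(3) by (simp add: abs_mult)
qed

end

lemma ip_simplex_if_fano_simplex: "fano_simplex V \<Longrightarrow> ip_simplex V"
  by unfold_locales (auto simp: fano_simplex_def full_simplex_vertices_def)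

theorem lemma4p1:
  fixes V :: "(real^'n) set"
  assumes "fano_simplex V"
  shows "real (gorenstein_index (convex hull V)) ^ (CARD('n) - 1)
           * weight_factor (vertices (dual_poly (convex hull V))) \<in> \<int>"
proof -
  interpret ip_simplex V
    using assms by (rule ip_simplex_if_fano_simplex)
  define g where "g = gorenstein_index (convex hull V)"
  have primitive: "primitive_pt x" if "x \<in> V" for x
    using assms that by (simp add: fano_simplex_def)
  then have "\<forall>v\<in>V. integral_pt v"
    by (simp add: primitive_pt_def)
  then have g: "g \<ge> 1" "\<And>x. x \<in> V \<Longrightarrow> integral_pt (real g *\<^sub>R facet_normal x)"
    using gorenstein_index_facet_normals unfolding g_def by auto
  have "weight_factor (vertices (dual_poly (convex hull V)))
      = rational_factor (facet_normal ` V) (weight (facet_normal ` V))"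
    by (simp add: dual_poly_convex_hull vertices_dual_poly weight_factor_eq_rational_factor)
  moreover have "real g ^ (CARD('n) - 1)
      * rational_factor (facet_normal ` V) (weight (facet_normal ` V)) \<in> \<int>"
  proof (rule Ints_mult_rational_factor)
    show "real g ^ (CARD('n) - 1) * weight (facet_normal ` V) u \<in> \<int>" if "u \<in> facet_normal ` V" for u
      using that g Ints_power_mult_weight_facet_normal[OF _ primitive] by auto
  qed (use V_nonempty g weight_facet_normal_pos in auto)
  ultimately show ?thesis
    unfolding g_def by simp
qed

end
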